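(* Let $f:[0,1]\times\mathbb{R}^4\to\mathbb{R}$ be continuous, and suppose there exists a constant $M>0$ such that $|f(x,u,y,v,z)|\le \frac{M}{2}$ for all $(x,u,y,v,z)\in\mathcal{D}_M$, where $$\mathcal{D}_M=\Big\{(x,u,y,v,z)\;:\;0\le x\le 1,\ |u|\le \tfrac{M}{384},\ |y|\le \tfrac{M}{72\sqrt3},\ |v|\le M,\ |z|\le M\Big\}.$$ Assume further that there exist constants $K_1,K_2,K_3,K_4\ge 0$ such that $$|f(x,u_2,y_2,v_2,z_2)-f(x,u_1,y_1,v_1,z_1)|\le K_1|u_2-u_1|+K_2|y_2-y_1|+K_3|v_2-v_1|+K_4|z_2-z_1|$$ for all $(x,u_i,y_i,v_i,z_i)\in\mathcal{D}_M$ $(i=1,2)$, and that $$q=\frac{K_1}{384}+\frac{K_2}{72\sqrt3}+K_3+K_4<\frac12 .$$ Then the boundary value problem $$u^{(4)}(x)=f(x,u(x),u'(x),u''(x),u'''(x)),\quad 0<x<1,\qquad u(0)=u(1)=0,\quad u'(0)=u'(1)=0,$$ has a unique solution $u$, and $$\|u\|_\infty\le \frac{M}{384},\quad \|u'\|_\infty\le \frac{M}{72\sqrt3},\quad \|u''\|_\infty\le M,\quad \|u'''\|_\infty\le M.$$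
   Context: A solution means a function $u\in C^4[0,1]$ satisfying the differential equation on $(0,1)$ and the boundary conditions. $\|g\|_\infty=\max_{x\in[0,1]}|g(x)|$. *)

theory Defs
  imports "HOL-Analysis.Analysis"
begin

definition in_DM :: "real \<Rightarrow> real \<Rightarrow> real \<Rightarrow> real \<Rightarrow> real \<Rightarrow> real \<Rightarrow> bool" where
  "in_DM M x u y v z \<longleftrightarrow> 0 \<le> x \<and> x \<le> 1 \<and> \<bar>u\<bar> \<le> M / 384 \<and>
     \<bar>y\<bar> \<le> M / (72 * sqrt 3) \<and> \<bar>v\<bar> \<le> M \<and> \<bar>z\<bar> \<le> M"

definition is_solution ::
  "(real \<Rightarrow> real \<Rightarrow> real \<Rightarrow> real \<Rightarrow> real \<Rightarrow> real) \<Rightarrow>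
   (real \<Rightarrow> real) \<Rightarrow> (real \<Rightarrow> real) \<Rightarrow> (real \<Rightarrow> real) \<Rightarrow> (real \<Rightarrow> real) \<Rightarrow> bool" where
  "is_solution f u u1 u2 u3 \<longleftrightarrow>
     (\<exists>u4. (\<forall>x\<in>{0..1}.
              (u has_real_derivative u1 x) (at x within {0..1}) \<and>
              (u1 has_real_derivative u2 x) (at x within {0..1}) \<and>
              (u2 has_real_derivative u3 x) (at x within {0..1}) \<and>
              (u3 has_real_derivative u4 x) (at x within {0..1})) \<and>
           continuous_on {0..1} u4 \<and>
           (\<forall>x\<in>{0<..<1}. u4 x = f x (u x) (u1 x) (u2 x) (u3 x))) \<and>
     u 0 = 0 \<and> u 1 = 0 \<and> u1 0 = 0 \<and> u1 1 = 0"

definition sol_bounds ::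
  "real \<Rightarrow> (real \<Rightarrow> real) \<Rightarrow> (real \<Rightarrow> real) \<Rightarrow> (real \<Rightarrow> real) \<Rightarrow> (real \<Rightarrow> real) \<Rightarrow> bool" where
  "sol_bounds M u u1 u2 u3 \<longleftrightarrow> (\<forall>x\<in>{0..1}.
     \<bar>u x\<bar> \<le> M / 384 \<and> \<bar>u1 x\<bar> \<le> M / (72 * sqrt 3) \<and> \<bar>u2 x\<bar> \<le> M \<and> \<bar>u3 x\<bar> \<le> M)"

end

theory Submission
  imports Defs
begin

text \<open>For continuous \<phi>, the clamped problem u'''' = \<phi>, u(0) = u(1) = u'(0) = u'(1) = 0 has
  the unique solution u = G \<phi>, where G is the integral operator whose kernel is the Green's
  function of the clamped beam. So, writing \<phi> = u'''', the boundary value problem is the fixed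
  point equation \<phi> x = f x (G \<phi> x) ((G \<phi>)' x) ((G \<phi>)'' x) ((G \<phi>)''' x). For every x, the
  kernels of G and of its first three x-derivatives have absolute integrals at most 1/384,
  1/(72 sqrt 3), 1 and 1, the radii in D_M. Hence on the ball sup |\<phi>| \<le> M the right-hand side
  stays in the ball and, by the Lipschitz condition, is a contraction with constant q < 1.
  Banach's fixed point theorem gives a solution, and any solution obeying the bounds yields a
  fixed point u'''' in the same ball, hence coincides with it.\<close>

lemma abs_affine_le_chord:
  fixes a b l r s :: real
  assumes "l \<le> s" "s \<le> r"
  shows "(r - l) * \<bar>a + b * s\<bar> \<le> \<bar>a + b * l\<bar> * (r - s) + \<bar>a + b * r\<bar> * (s - l)"
proof -
  have "(r - l) * (a + b * s) = (a + b * l) * (r - s) + (a + b * r) * (s - l)"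
    by (simp add: algebra_simps)
  then have "\<bar>(r - l) * (a + b * s)\<bar> \<le> \<bar>(a + b * l) * (r - s)\<bar> + \<bar>(a + b * r) * (s - l)\<bar>"
    by (metis abs_triangle_ineq)
  then show ?thesis
    using assms by (simp add: abs_mult)
qed

lemma left_kernel_integral_bound:
  fixes \<phi> :: "real \<Rightarrow> real"
  assumes x: "0 \<le> x" and cont: "continuous_on {0..x} \<phi>"
    and bound: "\<And>s. s \<in> {0..x} \<Longrightarrow> \<bar>\<phi> s\<bar> \<le> D"
  shows "\<bar>integral {0..x} (\<lambda>s. s^2 * (a + b * s) * \<phi> s)\<bar>
           \<le> D * (x^3 * (\<bar>a\<bar> + 3 * \<bar>a + b * x\<bar>) / 12)"
proof (cases "x = 0")
  case True
  then show ?thesis using bound[of 0] by simp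
next
  case False
  with x have x_pos: "x > 0" by simp
  have D_nonneg: "0 \<le> D" using bound[of 0] x by force
  define g where "g s = D / x * (s^2 * (\<bar>a\<bar> * (x - s) + \<bar>a + b * x\<bar> * s))" for s
  define G where "G s = D / x * (\<bar>a\<bar> * (x * s^3 / 3 - s^4 / 4) + \<bar>a + b * x\<bar> * s^4 / 4)" for s
  have "(g has_integral (G x - G 0)) {0..x}"
  proof (rule fundamental_theorem_of_calculus[OF x])
    fix s assume "s \<in> {0..x}"
    have "(G has_real_derivative g s) (at s within {0..x})"
      unfolding G_def g_def
      by (rule derivative_eq_intros refl | simp)+
        (simp add: algebra_simps power2_eq_square power3_eq_cube)
    then show "(G has_vector_derivative g s) (at s within {0..x})"
      by (simp add: has_real_derivative_iff_has_vector_derivative)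
  qed
  moreover have "G x - G 0 = D * (x^3 * (\<bar>a\<bar> + 3 * \<bar>a + b * x\<bar>) / 12)"
    using x_pos unfolding G_def by (simp add: field_simps power4_eq_xxxx power3_eq_cube)
  ultimately have g_int: "(g has_integral D * (x^3 * (\<bar>a\<bar> + 3 * \<bar>a + b * x\<bar>) / 12)) {0..x}"
    by simp
  have "norm (integral {0..x} (\<lambda>s. s^2 * (a + b * s) * \<phi> s)) \<le> integral {0..x} g"
  proof (rule integral_norm_bound_integral)
    show "(\<lambda>s. s^2 * (a + b * s) * \<phi> s) integrable_on {0..x}"
      by (intro integrable_continuous_interval continuous_intros cont)
    show "g integrable_on {0..x}" using g_int by blast
    fix s assume s: "s \<in> {0..x}"
    have "norm (s^2 * (a + b * s) * \<phi> s) \<le> s^2 * \<bar>a + b * s\<bar> * D"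
      using bound[OF s] by (simp add: abs_mult mult_left_mono)
    also have "\<dots> = D / x * (s^2 * (x * \<bar>a + b * s\<bar>))"
      using x_pos by simp
    also have "\<dots> \<le> g s"
      unfolding g_def using s abs_affine_le_chord[of 0 s x a b] D_nonneg x_pos
      by (intro mult_left_mono) auto
    finally show "norm (s^2 * (a + b * s) * \<phi> s) \<le> g s" .
  qed
  then show ?thesis
    using integral_unique[OF g_int] by simp
qed

lemma right_kernel_integral_bound:
  fixes \<phi> :: "real \<Rightarrow> real"
  assumes x: "x \<le> 1" and cont: "continuous_on {x..1} \<phi>"
    and bound: "\<And>s. s \<in> {x..1} \<Longrightarrow> \<bar>\<phi> s\<bar> \<le> D"
  shows "\<bar>integral {x..1} (\<lambda>s. (1 - s)^2 * (c + d * s) * \<phi> s)\<bar>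
           \<le> D * ((1 - x)^3 * (3 * \<bar>c + d * x\<bar> + \<bar>c + d\<bar>) / 12)"
proof (cases "x = 1")
  case True
  then show ?thesis using bound[of 1] by simp
next
  case False
  with x have x_pos: "1 - x > 0" by simp
  have D_nonneg: "0 \<le> D" using bound[of 1] x by force
  define g where "g s = D / (1 - x) * ((1 - s)^2 * (\<bar>c + d * x\<bar> * (1 - s) + \<bar>c + d\<bar> * (s - x)))" for s
  define G where "G s = D / (1 - x) * (- \<bar>c + d * x\<bar> * (1 - s)^4 / 4
      + \<bar>c + d\<bar> * (- (1 - x) * (1 - s)^3 / 3 + (1 - s)^4 / 4))" for s
  have "(g has_integral (G 1 - G x)) {x..1}"
  proof (rule fundamental_theorem_of_calculus[OF x])
    fix s assume "s \<in> {x..1}"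
    have "(G has_real_derivative g s) (at s within {x..1})"
      unfolding G_def g_def
      by (rule derivative_eq_intros refl | simp)+
        (simp add: algebra_simps power2_eq_square power3_eq_cube)
    then show "(G has_vector_derivative g s) (at s within {x..1})"
      by (simp add: has_real_derivative_iff_has_vector_derivative)
  qed
  moreover have "G 1 - G x = D * ((1 - x)^3 * (3 * \<bar>c + d * x\<bar> + \<bar>c + d\<bar>) / 12)"
    using x_pos unfolding G_def by (simp add: field_simps power4_eq_xxxx power3_eq_cube)
  ultimately have g_int: "(g has_integral D * ((1 - x)^3 * (3 * \<bar>c + d * x\<bar> + \<bar>c + d\<bar>) / 12)) {x..1}"
    by simp
  have "norm (integral {x..1} (\<lambda>s. (1 - s)^2 * (c + d * s) * \<phi> s)) \<le> integral {x..1} g"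
  proof (rule integral_norm_bound_integral)
    show "(\<lambda>s. (1 - s)^2 * (c + d * s) * \<phi> s) integrable_on {x..1}"
      by (intro integrable_continuous_interval continuous_intros cont)
    show "g integrable_on {x..1}" using g_int by blast
    fix s assume s: "s \<in> {x..1}"
    have "norm ((1 - s)^2 * (c + d * s) * \<phi> s) \<le> (1 - s)^2 * \<bar>c + d * s\<bar> * D"
      using bound[OF s] by (simp add: abs_mult mult_left_mono)
    also have "\<dots> = D / (1 - x) * ((1 - s)^2 * ((1 - x) * \<bar>c + d * s\<bar>))"
      using x_pos by simp
    also have "\<dots> \<le> g s"
      unfolding g_def using s abs_affine_le_chord[of x s 1 c d] D_nonneg x_pos
      by (intro mult_left_mono) auto
    finally show "norm ((1 - s)^2 * (c + d * s) * \<phi> s) \<le> g s" .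
  qed
  then show ?thesis
    using integral_unique[OF g_int] by simp
qed

definition weighted_integral :: "(real \<Rightarrow> real) \<Rightarrow> (real \<Rightarrow> real) \<Rightarrow> real \<Rightarrow> real" where
  "weighted_integral w \<phi> x = integral {0..x} (\<lambda>s. w s * \<phi> s)"

text \<open>The integral of s^2 (a + b s) \<phi> s over [0, x] plus that of (1 - s)^2 (c + d s) \<phi> s
  over [x, 1], written through integrals starting at 0 so that it can be differentiated in x
  when a, b, c, d depend on x.\<close>
definition kernel_integral ::
  "real \<Rightarrow> real \<Rightarrow> real \<Rightarrow> real \<Rightarrow> (real \<Rightarrow> real) \<Rightarrow> real \<Rightarrow> real" where
  "kernel_integral a b c d \<phi> x =
     a * weighted_integral (\<lambda>s. s^2) \<phi> x + b * weighted_integral (\<lambda>s. s^3) \<phi> x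
     + c * (weighted_integral (\<lambda>s. (1 - s)^2) \<phi> 1 - weighted_integral (\<lambda>s. (1 - s)^2) \<phi> x)
     + d * (weighted_integral (\<lambda>s. s * (1 - s)^2) \<phi> 1
            - weighted_integral (\<lambda>s. s * (1 - s)^2) \<phi> x)"

lemma weighted_integral_diff:
  assumes "continuous_on {0..1} w" "continuous_on {0..1} \<phi>" "continuous_on {0..1} \<gamma>"
    and "x \<in> {0..1}"
  shows "weighted_integral w (\<lambda>s. \<phi> s - \<gamma> s) x = weighted_integral w \<phi> x - weighted_integral w \<gamma> x"
proof -
  have sub: "{0..x} \<subseteq> {0..1}" using assms(4) by auto
  have "(\<lambda>s. w s * \<phi> s) integrable_on {0..x}" "(\<lambda>s. w s * \<gamma> s) integrable_on {0..x}"
    by (intro integrable_continuous_interval continuous_on_mult continuous_on_subset[OF _ sub] assms)+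
  then show ?thesis
    unfolding weighted_integral_def by (simp add: right_diff_distrib integral_diff)
qed

lemma weighted_integral_cong:
  assumes "\<And>s. s \<in> {0..1} \<Longrightarrow> \<phi> s = \<gamma> s" "x \<in> {0..1}"
  shows "weighted_integral w \<phi> x = weighted_integral w \<gamma> x"
  unfolding weighted_integral_def
proof (rule integral_cong)
  fix s assume "s \<in> {0..x}"
  with assms show "w s * \<phi> s = w s * \<gamma> s" by auto
qed

lemma weighted_integral_has_derivative:
  assumes "continuous_on {0..1} w" "continuous_on {0..1} \<phi>" "x \<in> {0..1}"
  shows "(weighted_integral w \<phi> has_real_derivative w x * \<phi> x) (at x within {0..1})"
  unfolding weighted_integral_def
  using integral_has_real_derivative[of 0 1 "\<lambda>s. w s * \<phi> s" x] assms
  by (simp add: continuous_on_mult)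

lemma kernel_integral_eq:
  assumes cont: "continuous_on {0..1} \<phi>" and x: "x \<in> {0..1}"
  shows "kernel_integral a b c d \<phi> x = integral {0..x} (\<lambda>s. s^2 * (a + b * s) * \<phi> s)
           + integral {x..1} (\<lambda>s. (1 - s)^2 * (c + d * s) * \<phi> s)"
proof -
  have cont_left: "continuous_on {0..x} \<phi>" and cont_right: "continuous_on {x..1} \<phi>"
    using x by (auto intro: continuous_on_subset[OF cont])
  have tail: "weighted_integral w \<phi> 1 - weighted_integral w \<phi> x = integral {x..1} (\<lambda>s. w s * \<phi> s)"
    if "continuous_on {0..1} w" for w
  proof -
    have "(\<lambda>s. w s * \<phi> s) integrable_on {0..1}"
      by (intro integrable_continuous_interval continuous_on_mult that cont)
    then have "integral {0..x} (\<lambda>s. w s * \<phi> s) + integral {x..1} (\<lambda>s. w s * \<phi> s)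
        = integral {0..1} (\<lambda>s. w s * \<phi> s)"
      by (rule Henstock_Kurzweil_Integration.integral_combine[rotated 2]) (use x in auto)
    then show ?thesis
      unfolding weighted_integral_def by simp
  qed
  have "integral {0..x} (\<lambda>s. s^2 * (a + b * s) * \<phi> s)
      = integral {0..x} (\<lambda>s. a * (s^2 * \<phi> s) + b * (s^3 * \<phi> s))"
    by (rule integral_cong) (simp add: algebra_simps power2_eq_square power3_eq_cube)
  also have "\<dots> = a * weighted_integral (\<lambda>s. s^2) \<phi> x + b * weighted_integral (\<lambda>s. s^3) \<phi> x"
    unfolding weighted_integral_def
    by (subst integral_add) (auto intro!: integrable_continuous_interval continuous_intros cont_left)
  finally have left: "integral {0..x} (\<lambda>s. s^2 * (a + b * s) * \<phi> s)
      = a * weighted_integral (\<lambda>s. s^2) \<phi> x + b * weighted_integral (\<lambda>s. s^3) \<phi> x" .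
  have "integral {x..1} (\<lambda>s. (1 - s)^2 * (c + d * s) * \<phi> s)
      = integral {x..1} (\<lambda>s. c * ((1 - s)^2 * \<phi> s) + d * (s * (1 - s)^2 * \<phi> s))"
    by (rule integral_cong) (simp add: algebra_simps)
  also have "\<dots> = c * integral {x..1} (\<lambda>s. (1 - s)^2 * \<phi> s)
      + d * integral {x..1} (\<lambda>s. s * (1 - s)^2 * \<phi> s)"
    by (subst integral_add) (auto intro!: integrable_continuous_interval continuous_intros cont_right)
  moreover have "continuous_on {0..1} (\<lambda>s::real. (1 - s)^2)"
    "continuous_on {0..1} (\<lambda>s::real. s * (1 - s)^2)"
    by (intro continuous_intros)+
  ultimately show ?thesis
    unfolding kernel_integral_def left by (simp add: tail mult.assoc)
qed

text \<open>Bounding |a + b s| and |c + d s| by their chords over [0, x] and [x, 1] turns the integral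
  of the absolute value of the kernel of kernel_integral into this quantity.\<close>
definition kernel_abs_bound :: "real \<Rightarrow> real \<Rightarrow> real \<Rightarrow> real \<Rightarrow> real \<Rightarrow> real" where
  "kernel_abs_bound a b c d x =
     x^3 * (\<bar>a\<bar> + 3 * \<bar>a + b * x\<bar>) / 12 + (1 - x)^3 * (3 * \<bar>c + d * x\<bar> + \<bar>c + d\<bar>) / 12"

lemma kernel_integral_abs_le:
  assumes cont: "continuous_on {0..1} \<phi>" and bound: "\<And>s. s \<in> {0..1} \<Longrightarrow> \<bar>\<phi> s\<bar> \<le> D"
    and x: "x \<in> {0..1}"
  shows "\<bar>kernel_integral a b c d \<phi> x\<bar> \<le> D * kernel_abs_bound a b c d x"
proof -
  have left: "\<bar>integral {0..x} (\<lambda>s. s^2 * (a + b * s) * \<phi> s)\<bar>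
      \<le> D * (x^3 * (\<bar>a\<bar> + 3 * \<bar>a + b * x\<bar>) / 12)"
    by (rule left_kernel_integral_bound) (use x bound in \<open>auto intro: continuous_on_subset[OF cont]\<close>)
  have right: "\<bar>integral {x..1} (\<lambda>s. (1 - s)^2 * (c + d * s) * \<phi> s)\<bar>
      \<le> D * ((1 - x)^3 * (3 * \<bar>c + d * x\<bar> + \<bar>c + d\<bar>) / 12)"
    by (rule right_kernel_integral_bound) (use x bound in \<open>auto intro: continuous_on_subset[OF cont]\<close>)
  have "\<bar>kernel_integral a b c d \<phi> x\<bar>
      \<le> \<bar>integral {0..x} (\<lambda>s. s^2 * (a + b * s) * \<phi> s)\<bar>
        + \<bar>integral {x..1} (\<lambda>s. (1 - s)^2 * (c + d * s) * \<phi> s)\<bar>"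
    unfolding kernel_integral_eq[OF cont x] by (rule abs_triangle_ineq)
  also have "\<dots> \<le> D * kernel_abs_bound a b c d x"
    using add_mono[OF left right] by (simp add: kernel_abs_bound_def distrib_left)
  finally show ?thesis .
qed

lemma kernel_integral_diff:
  assumes "continuous_on {0..1} \<phi>" "continuous_on {0..1} \<gamma>" "x \<in> {0..1}"
  shows "kernel_integral a b c d (\<lambda>s. \<phi> s - \<gamma> s) x
           = kernel_integral a b c d \<phi> x - kernel_integral a b c d \<gamma> x"
proof -
  have weights: "continuous_on {0..1} (\<lambda>s::real. s^2)" "continuous_on {0..1} (\<lambda>s::real. s^3)"
    "continuous_on {0..1} (\<lambda>s::real. (1 - s)^2)" "continuous_on {0..1} (\<lambda>s::real. s * (1 - s)^2)"
    by (intro continuous_intros)+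
  note diff = weighted_integral_diff[OF _ assms(1,2)]
  have one: "(1::real) \<in> {0..1}" by simp
  show ?thesis
    unfolding kernel_integral_def diff[OF weights(1) assms(3)] diff[OF weights(2) assms(3)]
      diff[OF weights(3) assms(3)] diff[OF weights(3) one]
      diff[OF weights(4) assms(3)] diff[OF weights(4) one]
    by (simp add: algebra_simps)
qed

lemma kernel_integral_cong:
  assumes "\<And>s. s \<in> {0..1} \<Longrightarrow> \<phi> s = \<gamma> s" "x \<in> {0..1}"
  shows "kernel_integral a b c d \<phi> x = kernel_integral a b c d \<gamma> x"
  unfolding kernel_integral_def using weighted_integral_cong[OF assms(1)] assms(2) by simp

lemma kernel_integral_has_derivative:
  fixes a b c d :: "real \<Rightarrow> real"
  assumes cont: "continuous_on {0..1} \<phi>" and x: "x \<in> {0..1}"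
    and "(a has_real_derivative a') (at x within {0..1})"
    and "(b has_real_derivative b') (at x within {0..1})"
    and "(c has_real_derivative c') (at x within {0..1})"
    and "(d has_real_derivative d') (at x within {0..1})"
  shows "((\<lambda>y. kernel_integral (a y) (b y) (c y) (d y) \<phi> y) has_real_derivative
      kernel_integral a' b' c' d' \<phi> x
      + \<phi> x * (a x * x^2 + b x * x^3 - c x * (1 - x)^2 - d x * (x * (1 - x)^2)))
      (at x within {0..1})"
proof -
  note w_deriv = weighted_integral_has_derivative[OF _ cont x]
  have "((\<lambda>y. a y * weighted_integral (\<lambda>s. s^2) \<phi> y + b y * weighted_integral (\<lambda>s. s^3) \<phi> y
      + c y * (weighted_integral (\<lambda>s. (1 - s)^2) \<phi> 1 - weighted_integral (\<lambda>s. (1 - s)^2) \<phi> y)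
      + d y * (weighted_integral (\<lambda>s. s * (1 - s)^2) \<phi> 1
               - weighted_integral (\<lambda>s. s * (1 - s)^2) \<phi> y)) has_real_derivative
      (a' * weighted_integral (\<lambda>s. s^2) \<phi> x + x^2 * \<phi> x * a x)
      + (b' * weighted_integral (\<lambda>s. s^3) \<phi> x + x^3 * \<phi> x * b x)
      + (c' * (weighted_integral (\<lambda>s. (1 - s)^2) \<phi> 1 - weighted_integral (\<lambda>s. (1 - s)^2) \<phi> x)
         + (0 - (1 - x)^2 * \<phi> x) * c x)
      + (d' * (weighted_integral (\<lambda>s. s * (1 - s)^2) \<phi> 1
               - weighted_integral (\<lambda>s. s * (1 - s)^2) \<phi> x)
         + (0 - x * (1 - x)^2 * \<phi> x) * d x)) (at x within {0..1})"
    by (intro DERIV_add DERIV_mult DERIV_diff DERIV_const assms w_deriv continuous_intros)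
  then show ?thesis
    unfolding kernel_integral_def by (rule DERIV_cong) (simp add: algebra_simps)
qed

text \<open>green0 \<phi> x is the integral of G(x, s) \<phi> s over [0, 1], where
  G(x, s) = s^2 (1 - x)^2 (3 x - (1 + 2 x) s) / 6 for s \<le> x, and symmetrically for s \<ge> x,
  is the Green's function of u'''' = \<phi>, u(0) = u(1) = u'(0) = u'(1) = 0;
  green1, green2, green3 are its successive derivatives in x.\<close>
definition green0 :: "(real \<Rightarrow> real) \<Rightarrow> real \<Rightarrow> real" where
  "green0 \<phi> x = kernel_integral (x * (1 - x)^2 / 2) (- (1 + 2 * x) * (1 - x)^2 / 6)
                                (- (x^3) / 6) (x^2 * (3 - 2 * x) / 6) \<phi> x"

definition green1 :: "(real \<Rightarrow> real) \<Rightarrow> real \<Rightarrow> real" where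
  "green1 \<phi> x = kernel_integral ((1 - x) * (1 - 3 * x) / 2) (x * (1 - x)) (- (x^2) / 2) (x * (1 - x)) \<phi> x"

definition green2 :: "(real \<Rightarrow> real) \<Rightarrow> real \<Rightarrow> real" where
  "green2 \<phi> x = kernel_integral (3 * x - 2) (1 - 2 * x) (- x) (1 - 2 * x) \<phi> x"

definition green3 :: "(real \<Rightarrow> real) \<Rightarrow> real \<Rightarrow> real" where
  "green3 \<phi> x = kernel_integral 3 (-2) (-1) (-2) \<phi> x"

lemma green_has_derivative:
  assumes cont: "continuous_on {0..1} \<phi>" and x: "x \<in> {0..1}"
  shows "(green0 \<phi> has_real_derivative green1 \<phi> x) (at x within {0..1})"
    and "(green1 \<phi> has_real_derivative green2 \<phi> x) (at x within {0..1})"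
    and "(green2 \<phi> has_real_derivative green3 \<phi> x) (at x within {0..1})"
    and "(green3 \<phi> has_real_derivative \<phi> x) (at x within {0..1})"
proof -
  note deriv = kernel_integral_has_derivative[OF cont x]
  have "(green0 \<phi> has_real_derivative
      kernel_integral ((1 - x) * (1 - 3 * x) / 2) (x * (1 - x)) (- (x^2) / 2) (x * (1 - x)) \<phi> x
      + \<phi> x * (x * (1 - x)^2 / 2 * x^2 + (- (1 + 2 * x) * (1 - x)^2 / 6) * x^3
               - (- (x^3) / 6) * (1 - x)^2 - (x^2 * (3 - 2 * x) / 6) * (x * (1 - x)^2)))
      (at x within {0..1})"
    unfolding green0_def[abs_def]
    by (rule deriv; (rule derivative_eq_intros refl | simp)+;
        simp add: algebra_simps power2_eq_square power3_eq_cube)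
  then show "(green0 \<phi> has_real_derivative green1 \<phi> x) (at x within {0..1})"
    by (rule DERIV_cong) (simp add: green1_def field_simps; algebra)
  have "(green1 \<phi> has_real_derivative kernel_integral (3 * x - 2) (1 - 2 * x) (- x) (1 - 2 * x) \<phi> x
      + \<phi> x * ((1 - x) * (1 - 3 * x) / 2 * x^2 + (x * (1 - x)) * x^3
               - (- (x^2) / 2) * (1 - x)^2 - (x * (1 - x)) * (x * (1 - x)^2)))
      (at x within {0..1})"
    unfolding green1_def[abs_def]
    by (rule deriv; (rule derivative_eq_intros refl | simp)+;
        simp add: algebra_simps power2_eq_square power3_eq_cube)
  then show "(green1 \<phi> has_real_derivative green2 \<phi> x) (at x within {0..1})"
    by (rule DERIV_cong) (simp add: green2_def field_simps; algebra)
  have "(green2 \<phi> has_real_derivative kernel_integral 3 (-2) (-1) (-2) \<phi> x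
      + \<phi> x * ((3 * x - 2) * x^2 + (1 - 2 * x) * x^3 - (- x) * (1 - x)^2
               - (1 - 2 * x) * (x * (1 - x)^2)))
      (at x within {0..1})"
    unfolding green2_def[abs_def]
    by (rule deriv; (rule derivative_eq_intros refl | simp)+)
  then show "(green2 \<phi> has_real_derivative green3 \<phi> x) (at x within {0..1})"
    by (rule DERIV_cong) (simp add: green3_def field_simps; algebra)
  have "((\<lambda>y. kernel_integral ((\<lambda>_. 3) y) ((\<lambda>_. -2) y) ((\<lambda>_. -1) y) ((\<lambda>_. -2) y) \<phi> y)
      has_real_derivative kernel_integral 0 0 0 0 \<phi> x
      + \<phi> x * (3 * x^2 + (-2) * x^3 - (-1) * (1 - x)^2 - (-2) * (x * (1 - x)^2)))
      (at x within {0..1})"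
    by (rule deriv; rule DERIV_const)
  then show "(green3 \<phi> has_real_derivative \<phi> x) (at x within {0..1})"
    unfolding green3_def[abs_def]
    by (rule DERIV_cong) (simp add: kernel_integral_def algebra_simps power2_eq_square power3_eq_cube)
qed

lemma green_continuous_on:
  assumes "continuous_on {0..1} \<phi>"
  shows "continuous_on {0..1} (green0 \<phi>)" "continuous_on {0..1} (green1 \<phi>)"
    "continuous_on {0..1} (green2 \<phi>)" "continuous_on {0..1} (green3 \<phi>)"
  by (rule DERIV_continuous_on, erule green_has_derivative[OF assms])+

lemma green_boundary:
  "green0 \<phi> 0 = 0" "green0 \<phi> 1 = 0" "green1 \<phi> 0 = 0" "green1 \<phi> 1 = 0"
  by (simp_all add: green0_def green1_def kernel_integral_def weighted_integral_def)

lemma green_diff: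
  assumes "continuous_on {0..1} \<phi>" "continuous_on {0..1} \<gamma>" "x \<in> {0..1}"
  shows "green0 (\<lambda>s. \<phi> s - \<gamma> s) x = green0 \<phi> x - green0 \<gamma> x"
    "green1 (\<lambda>s. \<phi> s - \<gamma> s) x = green1 \<phi> x - green1 \<gamma> x"
    "green2 (\<lambda>s. \<phi> s - \<gamma> s) x = green2 \<phi> x - green2 \<gamma> x"
    "green3 (\<lambda>s. \<phi> s - \<gamma> s) x = green3 \<phi> x - green3 \<gamma> x"
  unfolding green0_def green1_def green2_def green3_def
  by (simp_all only: kernel_integral_diff[OF assms])

lemma green0_cong:
  assumes "\<And>s. s \<in> {0..1} \<Longrightarrow> \<phi> s = \<gamma> s" "x \<in> {0..1}"
  shows "green0 \<phi> x = green0 \<gamma> x"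
  unfolding green0_def by (rule kernel_integral_cong[OF assms])

lemma green0_kernel_abs_bound:
  fixes x :: real
  assumes x: "0 \<le> x" "x \<le> 1"
  shows "kernel_abs_bound (x * (1 - x)^2 / 2) (- (1 + 2 * x) * (1 - x)^2 / 6)
           (- (x^3) / 6) (x^2 * (3 - 2 * x) / 6) x \<le> 1 / 384"
proof -
  have e1: "x * (1 - x)^2 / 2 + (- (1 + 2 * x) * (1 - x)^2 / 6) * x = x * (1 - x)^3 / 3"
    and e2: "- (x^3) / 6 + (x^2 * (3 - 2 * x) / 6) * x = x^3 * (1 - x) / 3"
    and e3: "- (x^3) / 6 + (x^2 * (3 - 2 * x) / 6) = x^2 * (1 - x) / 2"
    by (simp_all add: field_simps power2_eq_square power3_eq_cube)
  have "kernel_abs_bound (x * (1 - x)^2 / 2) (- (1 + 2 * x) * (1 - x)^2 / 6)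
           (- (x^3) / 6) (x^2 * (3 - 2 * x) / 6) x
      = x^3 * (x * (1 - x)^2 / 2 + 3 * (x * (1 - x)^3 / 3)) / 12
        + (1 - x)^3 * (3 * (x^3 * (1 - x) / 3) + x^2 * (1 - x) / 2) / 12"
    unfolding kernel_abs_bound_def e1 e2 e3 using x by simp
  also have "\<dots> = (x * (1 - x))^2 / 24"
    by (simp add: field_simps power2_eq_square power3_eq_cube)
  also have "\<dots> \<le> (1 / 4)^2 / 24"
  proof -
    have "x * (1 - x) = 1/4 - (x - 1/2)^2"
      by (simp add: field_simps power2_eq_square)
    then have "x * (1 - x) \<le> 1/4" by simp
    then show ?thesis using x by (simp add: power_mono)
  qed
  finally show ?thesis by (simp add: power2_eq_square)
qed

lemma diff_cube_le:
  fixes y :: real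
  assumes "0 \<le> y"
  shows "y - y^3 \<le> 2 / (3 * sqrt 3)"
proof -
  define r where "r = sqrt 3"
  have r: "r * r = 3" "r > 0" unfolding r_def by simp_all
  have "(y - r / 3)^2 * (y + 2 * r / 3) = y^3 - y * (r * r) / 3 + 2 * r * (r * r) / 27"
    by (simp add: field_simps power2_eq_square power3_eq_cube)
  also have "\<dots> = y^3 - y + 2 / (3 * r)"
    using r by (simp add: field_simps)
  finally have "y^3 - y + 2 / (3 * r) \<ge> 0"
    using assms r by (metis zero_le_power2 add_nonneg_nonneg divide_nonneg_pos mult_nonneg_nonneg
        less_eq_real_def zero_le_numeral mult_pos_pos zero_less_numeral)
  then show ?thesis unfolding r_def by simp
qed

lemma power5_eq: "(t::real)^5 = t * t * t * t * t"
  by (simp add: eval_nat_numeral)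

lemma green1_middle_poly_le:
  fixes x :: real
  assumes x: "1/3 \<le> x" "x \<le> 1/2"
  shows "2*x - 6*x^2 + 2*x^3 + 8*x^4 - 6*x^5 \<le> 24/125"
proof -
  define t where "t = 6 * x - 2"
  have t: "0 \<le> t" "t \<le> 1" using x unfolding t_def by auto
  have "2*x - 6*x^2 + 2*x^3 + 8*x^4 - 6*x^5
      = 4/27 - 7*t/81 - 2*t^2/81 + t^3/36 - t^4/648 - t^5/1296"
    unfolding t_def
    by (simp add: field_simps power2_eq_square power3_eq_cube power4_eq_xxxx power5_eq)
  moreover have "t^3 \<le> 1" "0 \<le> t^2" "0 \<le> t^4" "0 \<le> t^5"
    using t by (simp_all add: power_le_one)
  ultimately show ?thesis using t by linarith
qed

lemma green1_kernel_abs_bound: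
  fixes x :: real
  assumes x: "0 \<le> x" "x \<le> 1"
  shows "kernel_abs_bound ((1 - x) * (1 - 3 * x) / 2) (x * (1 - x)) (- (x^2) / 2) (x * (1 - x)) x
           \<le> 1 / (72 * sqrt 3)"
proof -
  let ?T = "kernel_abs_bound ((1 - x) * (1 - 3 * x) / 2) (x * (1 - x)) (- (x^2) / 2) (x * (1 - x)) x"
  have e1: "(1 - x) * (1 - 3 * x) / 2 + x * (1 - x) * x = (1 - x)^2 * (1 - 2 * x) / 2"
    and e2: "- (x^2) / 2 + x * (1 - x) * x = x^2 * (1 - 2 * x) / 2"
    and e3: "- (x^2) / 2 + x * (1 - x) = x * (2 - 3 * x) / 2"
    by (simp_all add: field_simps power2_eq_square)
  have T: "?T = x^3 * ((1 - x) * \<bar>1 - 3 * x\<bar> / 2 + 3 * ((1 - x)^2 * \<bar>1 - 2 * x\<bar> / 2)) / 12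
      + (1 - x)^3 * (3 * (x^2 * \<bar>1 - 2 * x\<bar> / 2) + x * \<bar>2 - 3 * x\<bar> / 2) / 12"
    unfolding kernel_abs_bound_def e1 e2 e3 using x by (simp add: abs_mult)
  have sqrt3: "1 / 125 \<le> 1 / (72 * sqrt (3::real))"
  proof -
    have "sqrt 3 \<le> 125 / (72::real)"
      by (rule power2_le_imp_le) (auto simp: power2_eq_square)
    then show ?thesis by (simp add: field_simps)
  qed
  have quintic: "?T \<le> 1 / 125" if "?T = P / 24" "P \<le> 24 / 125" for P
    using that by linarith
  have cube: "(y - y^3) / 48 \<le> 1 / (72 * sqrt 3)" if "0 \<le> y" for y :: real
    using diff_cube_le[OF that] by (simp add: field_simps)
  consider "x \<le> 1/3" | "1/3 \<le> x" "x \<le> 1/2" | "1/2 \<le> x" "x \<le> 2/3" | "2/3 \<le> x"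
    by linarith
  then show ?thesis
  proof cases
    case 1
    then have "?T = ((1 - 2 * x) - (1 - 2 * x)^3) / 48"
      unfolding T by (simp add: abs_of_nonneg field_simps power2_eq_square power3_eq_cube)
    then show ?thesis using cube[of "1 - 2 * x"] 1 by simp
  next
    case 2
    then have "?T = (2*x - 6*x^2 + 2*x^3 + 8*x^4 - 6*x^5) / 24"
      unfolding T by (simp add: abs_of_nonneg abs_of_nonpos field_simps power2_eq_square
          power3_eq_cube power4_eq_xxxx power5_eq)
    then have "?T \<le> 1 / 125" by (rule quintic) (rule green1_middle_poly_le[OF 2])
    with sqrt3 show ?thesis by linarith
  next
    case 3
    then have "?T = (2*(1-x) - 6*(1-x)^2 + 2*(1-x)^3 + 8*(1-x)^4 - 6*(1-x)^5) / 24"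
      unfolding T by (simp add: abs_of_nonneg abs_of_nonpos field_simps power2_eq_square
          power3_eq_cube power4_eq_xxxx power5_eq)
    then have "?T \<le> 1 / 125" by (rule quintic) (rule green1_middle_poly_le, use 3 in auto)
    with sqrt3 show ?thesis by linarith
  next
    case 4
    then have "?T = ((2 * x - 1) - (2 * x - 1)^3) / 48"
      unfolding T by (simp add: abs_of_nonpos field_simps power2_eq_square power3_eq_cube)
    then show ?thesis using cube[of "2 * x - 1"] 4 by simp
  qed
qed

lemma kernel_abs_bound_le_1:
  fixes x :: real
  assumes x: "0 \<le> x" "x \<le> 1"
    and left: "\<bar>a\<bar> + 3 * \<bar>a + b * x\<bar> \<le> 12" and right: "3 * \<bar>c + d * x\<bar> + \<bar>c + d\<bar> \<le> 12"
  shows "kernel_abs_bound a b c d x \<le> 1"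
proof -
  have "x^3 \<le> x" "(1 - x)^3 \<le> 1 - x"
    using x power_decreasing[of 1 3 x] power_decreasing[of 1 3 "1 - x"] by simp_all
  have "x^3 * (\<bar>a\<bar> + 3 * \<bar>a + b * x\<bar>) \<le> x * 12"
    by (rule mult_mono) (use \<open>x^3 \<le> x\<close> x left in auto)
  moreover have "(1 - x)^3 * (3 * \<bar>c + d * x\<bar> + \<bar>c + d\<bar>) \<le> (1 - x) * 12"
    by (rule mult_mono) (use \<open>(1 - x)^3 \<le> 1 - x\<close> x right in auto)
  ultimately show ?thesis
    unfolding kernel_abs_bound_def by (simp add: field_simps)
qed

lemma green2_kernel_abs_bound:
  fixes x :: real
  assumes x: "0 \<le> x" "x \<le> 1"
  shows "kernel_abs_bound (3 * x - 2) (1 - 2 * x) (- x) (1 - 2 * x) x \<le> 1"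
proof (rule kernel_abs_bound_le_1[OF x])
  have "3 * x - 2 + (1 - 2 * x) * x = - 2 * (1 - x)^2" "- x + (1 - 2 * x) * x = - 2 * x^2"
    by (simp_all add: field_simps power2_eq_square)
  moreover have "(1 - x)^2 \<le> 1" "x^2 \<le> 1"
    using x by (simp_all add: power_le_one)
  ultimately show "\<bar>3 * x - 2\<bar> + 3 * \<bar>3 * x - 2 + (1 - 2 * x) * x\<bar> \<le> 12"
    "3 * \<bar>- x + (1 - 2 * x) * x\<bar> + \<bar>- x + (1 - 2 * x)\<bar> \<le> 12"
    using x by (simp_all add: abs_mult abs_le_iff)
qed

lemma green3_kernel_abs_bound:
  fixes x :: real
  assumes x: "0 \<le> x" "x \<le> 1"
  shows "kernel_abs_bound 3 (-2) (-1) (-2) x \<le> 1"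
  by (rule kernel_abs_bound_le_1[OF x]) (use x in auto)

lemma green_abs_le:
  assumes cont: "continuous_on {0..1} \<phi>" and bound: "\<And>s. s \<in> {0..1} \<Longrightarrow> \<bar>\<phi> s\<bar> \<le> D"
    and x: "x \<in> {0..1}"
  shows "\<bar>green0 \<phi> x\<bar> \<le> D / 384" "\<bar>green1 \<phi> x\<bar> \<le> D / (72 * sqrt 3)"
    "\<bar>green2 \<phi> x\<bar> \<le> D" "\<bar>green3 \<phi> x\<bar> \<le> D"
proof -
  have D: "0 \<le> D" using bound[of 0] by force
  have le: "\<bar>kernel_integral a b c d \<phi> x\<bar> \<le> D * C" if "kernel_abs_bound a b c d x \<le> C" for a b c d C
    using kernel_integral_abs_le[OF cont bound x, of a b c d] mult_left_mono[OF that D] by linarith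
  from x have "0 \<le> x" "x \<le> 1" by auto
  note bounds = green0_kernel_abs_bound[OF this] green1_kernel_abs_bound[OF this]
    green2_kernel_abs_bound[OF this] green3_kernel_abs_bound[OF this]
  show "\<bar>green0 \<phi> x\<bar> \<le> D / 384" "\<bar>green1 \<phi> x\<bar> \<le> D / (72 * sqrt 3)"
    "\<bar>green2 \<phi> x\<bar> \<le> D" "\<bar>green3 \<phi> x\<bar> \<le> D"
    using le[OF bounds(1)] le[OF bounds(2)] le[OF bounds(3)] le[OF bounds(4)]
    by (simp_all add: green0_def green1_def green2_def green3_def)
qed

lemma same_derivative_imp_const_diff:
  fixes f g f' :: "real \<Rightarrow> real"
  assumes "convex S"
    and "\<And>x. x \<in> S \<Longrightarrow> (f has_real_derivative f' x) (at x within S)"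
    and "\<And>x. x \<in> S \<Longrightarrow> (g has_real_derivative f' x) (at x within S)"
  obtains c where "\<And>x. x \<in> S \<Longrightarrow> f x = g x + c"
proof -
  have "((\<lambda>x. f x - g x) has_real_derivative 0) (at x within S)" if "x \<in> S" for x
    using DERIV_diff[OF assms(2,3)[OF that]] by simp
  then obtain c where c: "\<forall>x\<in>S. f x - g x = c"
    using has_field_derivative_zero_constant[OF assms(1)] by blast
  show thesis
  proof (rule that)
    fix x assume "x \<in> S"
    with c show "f x = g x + c" by (simp add: algebra_simps)
  qed
qed

lemma zero_fourth_derivative_imp_cubic:
  fixes g g1 g2 g3 :: "real \<Rightarrow> real"
  assumes "\<And>x. x \<in> {a..b} \<Longrightarrow>
      (g has_real_derivative g1 x) (at x within {a..b}) \<and>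
      (g1 has_real_derivative g2 x) (at x within {a..b}) \<and>
      (g2 has_real_derivative g3 x) (at x within {a..b}) \<and>
      (g3 has_real_derivative 0) (at x within {a..b})"
  obtains c3 c2 c1 c0 where "\<And>x. x \<in> {a..b} \<Longrightarrow>
      g x = c3 * x^3 / 6 + c2 * x^2 / 2 + c1 * x + c0 \<and> g1 x = c3 * x^2 / 2 + c2 * x + c1 \<and>
      g2 x = c3 * x + c2 \<and> g3 x = c3"
proof -
  note convex = convex_real_interval(5)[of a b]
  obtain c3 where c3: "\<And>x. x \<in> {a..b} \<Longrightarrow> g3 x = 0 + c3"
    by (rule same_derivative_imp_const_diff[OF convex, of g3 "\<lambda>_. 0" "\<lambda>_. 0"])
      (use assms in auto)
  obtain c2 where c2: "\<And>x. x \<in> {a..b} \<Longrightarrow> g2 x = c3 * x + c2"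
  proof (rule same_derivative_imp_const_diff[OF convex, of g2 g3 "\<lambda>x. c3 * x"])
    show "((\<lambda>x. c3 * x) has_real_derivative g3 x) (at x within {a..b})" if "x \<in> {a..b}" for x
      using c3[OF that] by (auto intro!: derivative_eq_intros)
  qed (use assms in auto)
  obtain c1 where c1: "\<And>x. x \<in> {a..b} \<Longrightarrow> g1 x = c3 * x^2 / 2 + c2 * x + c1"
  proof (rule same_derivative_imp_const_diff[OF convex, of g1 g2 "\<lambda>x. c3 * x^2 / 2 + c2 * x"])
    show "((\<lambda>x. c3 * x^2 / 2 + c2 * x) has_real_derivative g2 x) (at x within {a..b})"
      if "x \<in> {a..b}" for x
      using c2[OF that] by (auto intro!: derivative_eq_intros)
  qed (use assms in auto)
  obtain c0 where c0: "\<And>x. x \<in> {a..b} \<Longrightarrow> g x = c3 * x^3 / 6 + c2 * x^2 / 2 + c1 * x + c0"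
  proof (rule same_derivative_imp_const_diff[OF convex, of g g1
        "\<lambda>x. c3 * x^3 / 6 + c2 * x^2 / 2 + c1 * x"])
    show "((\<lambda>x. c3 * x^3 / 6 + c2 * x^2 / 2 + c1 * x) has_real_derivative g1 x) (at x within {a..b})"
      if "x \<in> {a..b}" for x
      using c1[OF that] by (auto intro!: derivative_eq_intros simp: power2_eq_square)
  qed (use assms in auto)
  show thesis
    by (rule that[of c3 c2 c1 c0]) (use c0 c1 c2 c3 in auto)
qed

lemma clamped_zero_fourth_derivative_imp_zero:
  fixes g g1 g2 g3 :: "real \<Rightarrow> real"
  assumes "\<And>x. x \<in> {0..1} \<Longrightarrow>
      (g has_real_derivative g1 x) (at x within {0..1}) \<and>
      (g1 has_real_derivative g2 x) (at x within {0..1}) \<and>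
      (g2 has_real_derivative g3 x) (at x within {0..1}) \<and>
      (g3 has_real_derivative 0) (at x within {0..1})"
    and "g 0 = 0" "g 1 = 0" "g1 0 = 0" "g1 1 = 0"
    and x: "x \<in> {0..1}"
  shows "g x = 0 \<and> g1 x = 0 \<and> g2 x = 0 \<and> g3 x = 0"
proof (rule zero_fourth_derivative_imp_cubic[OF assms(1)])
  fix c3 c2 c1 c0
  assume c: "\<And>x. x \<in> {0..1} \<Longrightarrow>
      g x = c3 * x^3 / 6 + c2 * x^2 / 2 + c1 * x + c0 \<and> g1 x = c3 * x^2 / 2 + c2 * x + c1 \<and>
      g2 x = c3 * x + c2 \<and> g3 x = c3"
  have "g 0 = c0" "g1 0 = c1" "g 1 = c3 / 6 + c2 / 2 + c1 + c0" "g1 1 = c3 / 2 + c2 + c1"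
    using c[of 0] c[of 1] by simp_all
  with assms(2-5) have "c0 = 0" "c1 = 0" "c2 = 0" "c3 = 0" by linarith+
  then show ?thesis using c[OF x] by simp
qed

lemma clamped_eq_green:
  assumes deriv: "\<And>x. x \<in> {0..1} \<Longrightarrow>
      (u has_real_derivative u1 x) (at x within {0..1}) \<and>
      (u1 has_real_derivative u2 x) (at x within {0..1}) \<and>
      (u2 has_real_derivative u3 x) (at x within {0..1}) \<and>
      (u3 has_real_derivative u4 x) (at x within {0..1})"
    and cont: "continuous_on {0..1} u4"
    and boundary: "u 0 = 0" "u 1 = 0" "u1 0 = 0" "u1 1 = 0"
    and x: "x \<in> {0..1}"
  shows "u x = green0 u4 x \<and> u1 x = green1 u4 x \<and> u2 x = green2 u4 x \<and> u3 x = green3 u4 x"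
proof -
  have "u x - green0 u4 x = 0 \<and> u1 x - green1 u4 x = 0 \<and>
        u2 x - green2 u4 x = 0 \<and> u3 x - green3 u4 x = 0"
  proof (rule clamped_zero_fourth_derivative_imp_zero[OF _ _ _ _ _ x])
    fix y :: real assume y: "y \<in> {0..1}"
    show "((\<lambda>y. u y - green0 u4 y) has_real_derivative u1 y - green1 u4 y) (at y within {0..1}) \<and>
        ((\<lambda>y. u1 y - green1 u4 y) has_real_derivative u2 y - green2 u4 y) (at y within {0..1}) \<and>
        ((\<lambda>y. u2 y - green2 u4 y) has_real_derivative u3 y - green3 u4 y) (at y within {0..1}) \<and>
        ((\<lambda>y. u3 y - green3 u4 y) has_real_derivative 0) (at y within {0..1})"
      using deriv[OF y] green_has_derivative[OF cont y]
      by (auto intro!: DERIV_diff[THEN DERIV_cong])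
  qed (simp_all add: boundary green_boundary)
  then show ?thesis by simp
qed

locale interval_ball_contraction =
  fixes a b M q :: real and T :: "(real \<Rightarrow> real) \<Rightarrow> real \<Rightarrow> real"
  assumes interval: "a \<le> b" and M_nonneg: "0 \<le> M"
    and q_nonneg: "0 \<le> q" and q_less_1: "q < 1"
    and maps_into_ball: "\<And>\<phi>. continuous_on {a..b} \<phi> \<Longrightarrow> (\<And>s. s \<in> {a..b} \<Longrightarrow> \<bar>\<phi> s\<bar> \<le> M) \<Longrightarrow>
      continuous_on {a..b} (T \<phi>) \<and> (\<forall>x\<in>{a..b}. \<bar>T \<phi> x\<bar> \<le> M)"
    and contraction: "\<And>\<phi> \<gamma> D x.
      continuous_on {a..b} \<phi> \<Longrightarrow> (\<And>s. s \<in> {a..b} \<Longrightarrow> \<bar>\<phi> s\<bar> \<le> M) \<Longrightarrow>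
      continuous_on {a..b} \<gamma> \<Longrightarrow> (\<And>s. s \<in> {a..b} \<Longrightarrow> \<bar>\<gamma> s\<bar> \<le> M) \<Longrightarrow>
      (\<And>s. s \<in> {a..b} \<Longrightarrow> \<bar>\<phi> s - \<gamma> s\<bar> \<le> D) \<Longrightarrow> x \<in> {a..b} \<Longrightarrow>
      \<bar>T \<phi> x - T \<gamma> x\<bar> \<le> q * D"
begin

text \<open>Clamping arguments to [a, b] and values to [-M, M] turns T into a contraction of the
  complete space of bounded continuous functions on the whole line.\<close>
lemma fixpoint_exists:
  obtains \<phi> where "continuous_on {a..b} \<phi>" "\<And>s. s \<in> {a..b} \<Longrightarrow> \<bar>\<phi> s\<bar> \<le> M"
    "\<And>x. x \<in> {a..b} \<Longrightarrow> T \<phi> x = \<phi> x"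
proof -
  define clamp where "clamp x = max a (min b x)" for x
  define trunc where "trunc v = max (- M) (min M v)" for v
  have trunc_bound: "\<bar>trunc v\<bar> \<le> M" for v
    using M_nonneg unfolding trunc_def by auto
  have trunc_lipschitz: "\<bar>trunc v - trunc w\<bar> \<le> \<bar>v - w\<bar>" for v w
    unfolding trunc_def by auto
  have trunc_cont: "continuous_on S (\<lambda>s. trunc (apply_bcontfun g s))" for S g
    unfolding trunc_def by (intro continuous_intros) auto
  have clamp_range: "clamp x \<in> {a..b}" for x
    using interval unfolding clamp_def by auto
  have clamp_cont: "continuous_on UNIV clamp"
    unfolding clamp_def by (intro continuous_intros)
  note T_trunc = maps_into_ball[OF trunc_cont trunc_bound]
  define F where "F g = Bcontfun (\<lambda>x. T (\<lambda>s. trunc (apply_bcontfun g s)) (clamp x))"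
    for g :: "real \<Rightarrow>\<^sub>C real"
  have apply_F: "apply_bcontfun (F g) = (\<lambda>x. T (\<lambda>s. trunc (apply_bcontfun g s)) (clamp x))" for g
    unfolding F_def
  proof (rule Bcontfun_inverse, rule bcontfun_normI)
    show "continuous_on UNIV (\<lambda>x. T (\<lambda>s. trunc (apply_bcontfun g s)) (clamp x))"
      by (rule continuous_on_compose2[OF conjunct1[OF T_trunc] clamp_cont])
        (use clamp_range in blast)
    show "norm (T (\<lambda>s. trunc (apply_bcontfun g s)) (clamp x)) \<le> M" for x
      using conjunct2[OF T_trunc] clamp_range by simp
  qed
  have "dist (F g) (F h) \<le> q * dist g h" for g h
  proof (rule dist_bound)
    fix x
    have "\<bar>trunc (apply_bcontfun g s) - trunc (apply_bcontfun h s)\<bar> \<le> dist g h" for s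
      using order_trans[OF trunc_lipschitz dist_bounded[of g s h, unfolded dist_real_def]] .
    then have "\<bar>T (\<lambda>s. trunc (apply_bcontfun g s)) (clamp x) - T (\<lambda>s. trunc (apply_bcontfun h s)) (clamp x)\<bar>
        \<le> q * dist g h"
      by (intro contraction[OF trunc_cont trunc_bound trunc_cont trunc_bound] clamp_range)
    then show "dist (apply_bcontfun (F g) x) (apply_bcontfun (F h) x) \<le> q * dist g h"
      unfolding apply_F dist_real_def .
  qed
  then obtain g where g: "F g = g"
    using banach_fix_type[OF q_nonneg q_less_1, of F] by blast
  show thesis
  proof (rule that)
    show "continuous_on {a..b} (\<lambda>s. trunc (apply_bcontfun g s))" by (rule trunc_cont)
    show "\<bar>trunc (apply_bcontfun g s)\<bar> \<le> M" for s by (rule trunc_bound)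
    fix x assume x: "x \<in> {a..b}"
    then have "clamp x = x" unfolding clamp_def by auto
    then have "apply_bcontfun g x = T (\<lambda>s. trunc (apply_bcontfun g s)) x"
      using apply_F[of g] g by metis
    moreover have "\<bar>T (\<lambda>s. trunc (apply_bcontfun g s)) x\<bar> \<le> M"
      using conjunct2[OF T_trunc] x by blast
    ultimately show "T (\<lambda>s. trunc (apply_bcontfun g s)) x = trunc (apply_bcontfun g x)"
      unfolding trunc_def by auto
  qed
qed

lemma fixpoint_unique:
  assumes \<phi>: "continuous_on {a..b} \<phi>" "\<And>s. s \<in> {a..b} \<Longrightarrow> \<bar>\<phi> s\<bar> \<le> M"
      "\<And>x. x \<in> {a..b} \<Longrightarrow> T \<phi> x = \<phi> x"
    and \<gamma>: "continuous_on {a..b} \<gamma>" "\<And>s. s \<in> {a..b} \<Longrightarrow> \<bar>\<gamma> s\<bar> \<le> M"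
      "\<And>x. x \<in> {a..b} \<Longrightarrow> T \<gamma> x = \<gamma> x"
    and x: "x \<in> {a..b}"
  shows "\<phi> x = \<gamma> x"
proof -
  have "continuous_on {a..b} (\<lambda>s. \<bar>\<phi> s - \<gamma> s\<bar>)"
    using \<phi>(1) \<gamma>(1) by (intro continuous_intros)
  then obtain x0 where x0: "x0 \<in> {a..b}" and max: "\<And>s. s \<in> {a..b} \<Longrightarrow> \<bar>\<phi> s - \<gamma> s\<bar> \<le> \<bar>\<phi> x0 - \<gamma> x0\<bar>"
    using continuous_attains_sup[of "{a..b}" "\<lambda>s. \<bar>\<phi> s - \<gamma> s\<bar>"] interval by auto
  define D where "D = \<bar>\<phi> x0 - \<gamma> x0\<bar>"
  have "D = \<bar>T \<phi> x0 - T \<gamma> x0\<bar>"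
    unfolding D_def using \<phi>(3) \<gamma>(3) x0 by simp
  also have "\<dots> \<le> q * D"
    by (rule contraction[OF \<phi>(1,2) \<gamma>(1,2)]) (use max x0 in \<open>auto simp: D_def\<close>)
  finally have "(1 - q) * D \<le> 0" by (simp add: algebra_simps)
  with q_less_1 have "D \<le> 0" by (simp add: mult_le_0_iff)
  then show ?thesis
    using max[OF x] unfolding D_def by simp
qed

end

definition beam_operator ::
  "(real \<Rightarrow> real \<Rightarrow> real \<Rightarrow> real \<Rightarrow> real \<Rightarrow> real) \<Rightarrow> (real \<Rightarrow> real) \<Rightarrow> real \<Rightarrow> real" where
  "beam_operator f \<phi> x = f x (green0 \<phi> x) (green1 \<phi> x) (green2 \<phi> x) (green3 \<phi> x)"

lemma continuous_on_compose_uncurried: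
  fixes f :: "real \<Rightarrow> real \<Rightarrow> real \<Rightarrow> real \<Rightarrow> real \<Rightarrow> real"
  assumes "continuous_on ({0..1} \<times> UNIV) (\<lambda>(x, u, y, v, z). f x u y v z)"
    and "continuous_on {0..1} g0" "continuous_on {0..1} g1"
    "continuous_on {0..1} g2" "continuous_on {0..1} g3"
  shows "continuous_on {0..1} (\<lambda>x. f x (g0 x) (g1 x) (g2 x) (g3 x))"
proof -
  have "continuous_on {0..1} (\<lambda>x. (x, g0 x, g1 x, g2 x, g3 x))"
    using assms(2-5) by (intro continuous_intros)
  from continuous_on_compose2[OF assms(1) this] show ?thesis by auto
qed

lemma green_in_DM:
  assumes "continuous_on {0..1} \<phi>" "\<And>s. s \<in> {0..1} \<Longrightarrow> \<bar>\<phi> s\<bar> \<le> M" "x \<in> {0..1}"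
  shows "in_DM M x (green0 \<phi> x) (green1 \<phi> x) (green2 \<phi> x) (green3 \<phi> x)"
  using green_abs_le[OF assms] assms(3) unfolding in_DM_def by auto

lemma beam_operator_contraction:
  fixes f :: "real \<Rightarrow> real \<Rightarrow> real \<Rightarrow> real \<Rightarrow> real \<Rightarrow> real"
  assumes cont: "continuous_on ({0..1} \<times> UNIV) (\<lambda>(x, u, y, v, z). f x u y v z)"
    and M: "M \<ge> 0"
    and bound: "\<And>x u y v z. in_DM M x u y v z \<Longrightarrow> \<bar>f x u y v z\<bar> \<le> M"
    and K: "K1 \<ge> 0" "K2 \<ge> 0" "K3 \<ge> 0" "K4 \<ge> 0"
    and lip: "\<And>x u1 y1 v1 z1 u2 y2 v2 z2.
       in_DM M x u1 y1 v1 z1 \<Longrightarrow> in_DM M x u2 y2 v2 z2 \<Longrightarrow>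
       \<bar>f x u2 y2 v2 z2 - f x u1 y1 v1 z1\<bar>
         \<le> K1 * \<bar>u2 - u1\<bar> + K2 * \<bar>y2 - y1\<bar> + K3 * \<bar>v2 - v1\<bar> + K4 * \<bar>z2 - z1\<bar>"
    and q: "K1 / 384 + K2 / (72 * sqrt 3) + K3 + K4 < 1"
  shows "interval_ball_contraction 0 1 M (K1 / 384 + K2 / (72 * sqrt 3) + K3 + K4) (beam_operator f)"
proof (rule interval_ball_contraction.intro)
  show "0 \<le> K1 / 384 + K2 / (72 * sqrt 3) + K3 + K4"
    using K by simp
  show "(0::real) \<le> 1" "0 \<le> M" "K1 / 384 + K2 / (72 * sqrt 3) + K3 + K4 < 1"
    using M q by simp_all
next
  fix \<phi> :: "real \<Rightarrow> real"
  assume \<phi>: "continuous_on {0..1} \<phi>" "\<And>s. s \<in> {0..1} \<Longrightarrow> \<bar>\<phi> s\<bar> \<le> M"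
  show "continuous_on {0..1} (beam_operator f \<phi>) \<and> (\<forall>x\<in>{0..1}. \<bar>beam_operator f \<phi> x\<bar> \<le> M)"
    unfolding beam_operator_def
    using continuous_on_compose_uncurried[OF cont green_continuous_on[OF \<phi>(1)]]
      bound[OF green_in_DM[OF \<phi>]] by blast
next
  fix \<phi> \<gamma> :: "real \<Rightarrow> real" and D x :: real
  assume \<phi>: "continuous_on {0..1} \<phi>" "\<And>s. s \<in> {0..1} \<Longrightarrow> \<bar>\<phi> s\<bar> \<le> M"
    and \<gamma>: "continuous_on {0..1} \<gamma>" "\<And>s. s \<in> {0..1} \<Longrightarrow> \<bar>\<gamma> s\<bar> \<le> M"
    and D: "\<And>s. s \<in> {0..1} \<Longrightarrow> \<bar>\<phi> s - \<gamma> s\<bar> \<le> D" and x: "x \<in> {0..1}"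
  have diff: "continuous_on {0..1} (\<lambda>s. \<phi> s - \<gamma> s)"
    using \<phi>(1) \<gamma>(1) by (intro continuous_intros)
  note green_diff = green_diff[OF \<phi>(1) \<gamma>(1) x]
  note green_le = green_abs_le[OF diff D x, unfolded green_diff]
  have "\<bar>beam_operator f \<phi> x - beam_operator f \<gamma> x\<bar>
      \<le> K1 * \<bar>green0 \<phi> x - green0 \<gamma> x\<bar> + K2 * \<bar>green1 \<phi> x - green1 \<gamma> x\<bar>
        + K3 * \<bar>green2 \<phi> x - green2 \<gamma> x\<bar> + K4 * \<bar>green3 \<phi> x - green3 \<gamma> x\<bar>"
    unfolding beam_operator_def by (rule lip[OF green_in_DM[OF \<gamma> x] green_in_DM[OF \<phi> x]])
  also have "\<dots> \<le> K1 * (D / 384) + K2 * (D / (72 * sqrt 3)) + K3 * D + K4 * D"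
    using green_le K by (intro add_mono mult_left_mono) auto
  also have "\<dots> = (K1 / 384 + K2 / (72 * sqrt 3) + K3 + K4) * D"
    by (simp add: algebra_simps)
  finally show "\<bar>beam_operator f \<phi> x - beam_operator f \<gamma> x\<bar>
      \<le> (K1 / 384 + K2 / (72 * sqrt 3) + K3 + K4) * D" .
qed

lemma fixpoint_is_solution:
  assumes "continuous_on {0..1} \<phi>" "\<And>x. x \<in> {0..1} \<Longrightarrow> beam_operator f \<phi> x = \<phi> x"
  shows "is_solution f (green0 \<phi>) (green1 \<phi>) (green2 \<phi>) (green3 \<phi>)"
proof -
  have "\<forall>x\<in>{0..1}. (green0 \<phi> has_real_derivative green1 \<phi> x) (at x within {0..1}) \<and>
      (green1 \<phi> has_real_derivative green2 \<phi> x) (at x within {0..1}) \<and>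
      (green2 \<phi> has_real_derivative green3 \<phi> x) (at x within {0..1}) \<and>
      (green3 \<phi> has_real_derivative \<phi> x) (at x within {0..1})"
    using green_has_derivative[OF assms(1)] by blast
  moreover have "\<forall>x\<in>{0<..<1}. \<phi> x = f x (green0 \<phi> x) (green1 \<phi> x) (green2 \<phi> x) (green3 \<phi> x)"
    using assms(2) by (simp add: beam_operator_def)
  ultimately show ?thesis
    unfolding is_solution_def using assms(1) green_boundary by blast
qed

lemma solution_is_green_of_fixpoint:
  fixes f :: "real \<Rightarrow> real \<Rightarrow> real \<Rightarrow> real \<Rightarrow> real \<Rightarrow> real"
  assumes cont: "continuous_on ({0..1} \<times> UNIV) (\<lambda>(x, u, y, v, z). f x u y v z)"
    and sol: "is_solution f w w1 w2 w3"
  obtains \<psi> where "continuous_on {0..1} \<psi>" "\<And>x. x \<in> {0..1} \<Longrightarrow> beam_operator f \<psi> x = \<psi> x"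
    "\<And>x. x \<in> {0..1} \<Longrightarrow> w x = green0 \<psi> x \<and> w1 x = green1 \<psi> x \<and> w2 x = green2 \<psi> x \<and> w3 x = green3 \<psi> x"
proof -
  obtain \<psi> where deriv: "\<And>x. x \<in> {0..1} \<Longrightarrow>
      (w has_real_derivative w1 x) (at x within {0..1}) \<and>
      (w1 has_real_derivative w2 x) (at x within {0..1}) \<and>
      (w2 has_real_derivative w3 x) (at x within {0..1}) \<and>
      (w3 has_real_derivative \<psi> x) (at x within {0..1})"
    and \<psi>: "continuous_on {0..1} \<psi>"
    and ode: "\<And>x. x \<in> {0<..<1} \<Longrightarrow> \<psi> x = f x (w x) (w1 x) (w2 x) (w3 x)"
    and boundary: "w 0 = 0" "w 1 = 0" "w1 0 = 0" "w1 1 = 0"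
    using sol unfolding is_solution_def by blast
  have green: "w x = green0 \<psi> x \<and> w1 x = green1 \<psi> x \<and> w2 x = green2 \<psi> x \<and> w3 x = green3 \<psi> x"
    if "x \<in> {0..1}" for x
    by (rule clamped_eq_green[OF deriv \<psi> boundary that])
  have fixed: "beam_operator f \<psi> x = \<psi> x" if x: "x \<in> {0..1}" for x
  proof -
    have "\<bar>beam_operator f \<psi> x - \<psi> x\<bar> \<le> 0"
    proof (rule continuous_le_on_closure[where S = "{0<..<1}" and f = "\<lambda>x. \<bar>beam_operator f \<psi> x - \<psi> x\<bar>"])
      show "continuous_on (closure {0<..<1}) (\<lambda>x. \<bar>beam_operator f \<psi> x - \<psi> x\<bar>)"
        unfolding beam_operator_def
        using continuous_on_compose_uncurried[OF cont green_continuous_on[OF \<psi>]] \<psi>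
        by (auto intro!: continuous_intros)
      show "x \<in> closure {0<..<1::real}" using x by simp
      show "\<bar>beam_operator f \<psi> y - \<psi> y\<bar> \<le> 0" if "y \<in> {0<..<1}" for y
        using ode[OF that] green[of y] that by (simp add: beam_operator_def)
    qed
    then show ?thesis by simp
  qed
  from \<psi> fixed green show thesis by (rule that)
qed

lemma bounded_solution_is_green_of_fixpoint:
  fixes f :: "real \<Rightarrow> real \<Rightarrow> real \<Rightarrow> real \<Rightarrow> real \<Rightarrow> real"
  assumes cont: "continuous_on ({0..1} \<times> UNIV) (\<lambda>(x, u, y, v, z). f x u y v z)"
    and bound: "\<And>x u y v z. in_DM M x u y v z \<Longrightarrow> \<bar>f x u y v z\<bar> \<le> M"
    and sol: "is_solution f w w1 w2 w3" and sol_bounds: "sol_bounds M w w1 w2 w3"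
  obtains \<psi> where "continuous_on {0..1} \<psi>" "\<And>s. s \<in> {0..1} \<Longrightarrow> \<bar>\<psi> s\<bar> \<le> M"
    "\<And>x. x \<in> {0..1} \<Longrightarrow> beam_operator f \<psi> x = \<psi> x" "\<And>x. x \<in> {0..1} \<Longrightarrow> w x = green0 \<psi> x"
proof (rule solution_is_green_of_fixpoint[OF cont sol])
  fix \<psi> assume \<psi>: "continuous_on {0..1} \<psi>" "\<And>x. x \<in> {0..1} \<Longrightarrow> beam_operator f \<psi> x = \<psi> x"
    and green: "\<And>x. x \<in> {0..1} \<Longrightarrow>
      w x = green0 \<psi> x \<and> w1 x = green1 \<psi> x \<and> w2 x = green2 \<psi> x \<and> w3 x = green3 \<psi> x"
  have "\<bar>\<psi> s\<bar> \<le> M" if s: "s \<in> {0..1}" for s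
  proof -
    have "\<psi> s = f s (w s) (w1 s) (w2 s) (w3 s)"
      using \<psi>(2)[OF s] green[OF s] by (simp add: beam_operator_def)
    moreover have "in_DM M s (w s) (w1 s) (w2 s) (w3 s)"
      using sol_bounds s unfolding sol_bounds_def in_DM_def by auto
    ultimately show ?thesis using bound by simp
  qed
  with \<psi> green show thesis by (intro that) auto
qed

theorem theorem1:
  fixes f :: "real \<Rightarrow> real \<Rightarrow> real \<Rightarrow> real \<Rightarrow> real \<Rightarrow> real"
    and M K1 K2 K3 K4 :: real
  assumes cont: "continuous_on ({0..1} \<times> UNIV) (\<lambda>(x, u, y, v, z). f x u y v z)"
    and M_pos: "M > 0"
    and bound: "\<And>x u y v z. in_DM M x u y v z \<Longrightarrow> \<bar>f x u y v z\<bar> \<le> M / 2"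
    and K_nonneg: "K1 \<ge> 0" "K2 \<ge> 0" "K3 \<ge> 0" "K4 \<ge> 0"
    and lip: "\<And>x u1 y1 v1 z1 u2 y2 v2 z2.
       in_DM M x u1 y1 v1 z1 \<Longrightarrow> in_DM M x u2 y2 v2 z2 \<Longrightarrow>
       \<bar>f x u2 y2 v2 z2 - f x u1 y1 v1 z1\<bar>
         \<le> K1 * \<bar>u2 - u1\<bar> + K2 * \<bar>y2 - y1\<bar> + K3 * \<bar>v2 - v1\<bar> + K4 * \<bar>z2 - z1\<bar>"
    and q: "K1 / 384 + K2 / (72 * sqrt 3) + K3 + K4 < 1 / 2"
  shows "\<exists>u u1 u2 u3. is_solution f u u1 u2 u3 \<and> sol_bounds M u u1 u2 u3 \<and>
           (\<forall>w w1 w2 w3. is_solution f w w1 w2 w3 \<and> sol_bounds M w w1 w2 w3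
              \<longrightarrow> (\<forall>x\<in>{0..1}. w x = u x))"
proof -
  have bound_M: "\<bar>f x u y v z\<bar> \<le> M" if "in_DM M x u y v z" for x u y v z
    using bound[OF that] M_pos by simp
  interpret interval_ball_contraction 0 1 M "K1 / 384 + K2 / (72 * sqrt 3) + K3 + K4"
    "beam_operator f"
    by (rule beam_operator_contraction[OF cont _ bound_M K_nonneg lip]) (use M_pos q in auto)
  show ?thesis
  proof (rule fixpoint_exists)
    fix \<phi> assume \<phi>: "continuous_on {0..1} \<phi>" "\<And>s. s \<in> {0..1} \<Longrightarrow> \<bar>\<phi> s\<bar> \<le> M"
      "\<And>x. x \<in> {0..1} \<Longrightarrow> beam_operator f \<phi> x = \<phi> x"
    show ?thesis
    proof (intro exI conjI allI impI ballI)
      show "is_solution f (green0 \<phi>) (green1 \<phi>) (green2 \<phi>) (green3 \<phi>)"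
        using fixpoint_is_solution[OF \<phi>(1,3)] .
      show "sol_bounds M (green0 \<phi>) (green1 \<phi>) (green2 \<phi>) (green3 \<phi>)"
        using green_abs_le[OF \<phi>(1,2)] unfolding sol_bounds_def by blast
      fix w w1 w2 w3 :: "real \<Rightarrow> real" and x :: real
      assume w: "is_solution f w w1 w2 w3 \<and> sol_bounds M w w1 w2 w3" and x: "x \<in> {0..1}"
      show "w x = green0 \<phi> x"
      proof (rule bounded_solution_is_green_of_fixpoint[OF cont bound_M conjunct1[OF w] conjunct2[OF w]])
        fix \<psi> assume \<psi>: "continuous_on {0..1} \<psi>" "\<And>s. s \<in> {0..1} \<Longrightarrow> \<bar>\<psi> s\<bar> \<le> M"
          "\<And>x. x \<in> {0..1} \<Longrightarrow> beam_operator f \<psi> x = \<psi> x" "\<And>x. x \<in> {0..1} \<Longrightarrow> w x = green0 \<psi> x"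
        have "green0 \<psi> x = green0 \<phi> x"
          using fixpoint_unique[OF \<psi>(1-3) \<phi>] by (rule green0_cong[OF _ x])
        with \<psi>(4)[OF x] show ?thesis by simp
      qed
    qed
  qed
qed

end
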